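(* Let $h\ge1$ and let $\{S(t):t\geq 0\}$ be an $\mathbb{R}^h$-valued Lévy process such that $\kappa_S(\theta):=\log\mathbb{E}\left[e^{\langle\theta,S(1)\rangle}\right]$ is finite for all $\theta$ in a neighborhood of the origin. Let $\{V(t):t\geq0\}$ be a subordinator, independent of $\{S(t)\}$, such that $\kappa_V(\eta):=\log\mathbb{E}[e^{\eta V(1)}]$ is finite for $\eta$ in a neighborhood of $0\in\mathbb{R}$ and $\kappa_V'(0)>0$. Then $S\left(\frac{V(t)}{t}\right)$ converges weakly to $S(\kappa_V'(0))$ as $t\to\infty$; more precisely, $$\lim_{t\to\infty}\mathbb{E}\left[e^{\langle\theta,S\left(\frac{V(t)}{t}\right)\rangle}\right]=\mathbb{E}\left[e^{\langle\theta,S(\kappa_V'(0))\rangle}\right]=e^{\kappa_V'(0)\kappa_S(\theta)}\quad\text{for all }\theta\in\mathbb{R}^h.$$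
   Context: $\langle\cdot,\cdot\rangle$ is the Euclidean inner product on $\mathbb{R}^h$; the equalities are understood in $[0,+\infty]$ (with $e^{+\infty}=+\infty$). *)

theory Defs
  imports "HOL-Probability.Probability"
begin

definition levy_process :: "'a measure \<Rightarrow> (real \<Rightarrow> 'a \<Rightarrow> 'b::euclidean_space) \<Rightarrow> bool" where
  "levy_process M X \<longleftrightarrow> prob_space M
    \<and> (\<forall>t\<ge>0. X t \<in> borel_measurable M)
    \<and> (AE \<omega> in M. X 0 \<omega> = 0)
    \<and> (\<forall>(n::nat) (t::nat \<Rightarrow> real). 0 \<le> t 0 \<and> (\<forall>i<n. t i < t (Suc i)) \<longrightarrow>
          prob_space.indep_vars M (\<lambda>_. borel) (\<lambda>i \<omega>. X (t (Suc i)) \<omega> - X (t i) \<omega>) {..<n})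
    \<and> (\<forall>s t. 0 \<le> s \<and> s \<le> t \<longrightarrow>
          distr M borel (\<lambda>\<omega>. X t \<omega> - X s \<omega>) = distr M borel (X (t - s)))
    \<and> (\<forall>t\<ge>0. \<forall>e>0. ((\<lambda>s. measure M {\<omega>\<in>space M. e < dist (X s \<omega>) (X t \<omega>)}) \<longlongrightarrow> 0)
          (at t within {0..}))
    \<and> (AE \<omega> in M. \<forall>t\<ge>0. continuous (at_right t) (\<lambda>s. X s \<omega>) \<and>
          (0 < t \<longrightarrow> (\<exists>l. ((\<lambda>s. X s \<omega>) \<longlongrightarrow> l) (at_left t))))"

definition subordinator :: "'a measure \<Rightarrow> (real \<Rightarrow> 'a \<Rightarrow> real) \<Rightarrow> bool" where
  "subordinator M V \<longleftrightarrow> levy_process M V \<and> (AE \<omega> in M. mono_on {0..} (\<lambda>t. V t \<omega>))"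

definition process_sigma :: "'a measure \<Rightarrow> (real \<Rightarrow> 'a \<Rightarrow> 'b::topological_space) \<Rightarrow> 'a set set" where
  "process_sigma M X = sigma_sets (space M) (\<Union>t\<in>{0..}. {X t -` A \<inter> space M | A. A \<in> sets borel})"

fun ennexp :: "ereal \<Rightarrow> ennreal" where
  "ennexp (ereal x) = ennreal (exp x)"
| "ennexp PInfty = \<infinity>"
| "ennexp MInfty = 0"

definition ennln :: "ennreal \<Rightarrow> ereal" where
  "ennln x = (if x = \<infinity> then \<infinity> else if x = 0 then -\<infinity> else ereal (ln (enn2real x)))"

end

theory Submission
  imports Defs
begin

(* For a Levy process X, the map t -> E exp <theta, X t> is multiplicative, nowhere zero and, by
   right-continuity of the paths and Fatou's lemma, lower semicontinuous at 0.  Solving this Cauchy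
   equation in [0, infinity] gives E exp <theta, X t> = exp (t kappa(theta)), also when
   kappa(theta) = ln E exp <theta, X 1> is infinite.  Since S has a jointly measurable version and is
   independent of V, Fubini gives E exp <theta, S (V t / t)> = E exp (kappa_S(theta) V t / t).
   For finite c = kappa_S(theta) this is exp (t kappa_V (c / t)), which tends to exp (c kappa_V'(0))
   because kappa_V(0) = 0, and kappa_V'(0) = E V 1 by differentiation under the integral sign.
   For kappa_S(theta) = infinity both sides are infinite, since V t is not a.s. zero for t >= 1. *)

lemma ennexp_zero [simp]: "ennexp 0 = 1"
  by (simp add: zero_ereal_def)

lemma ennexp_infinity [simp]: "ennexp \<infinity> = \<infinity>"
  using ennexp.simps(2) by simp

lemma multiplicative_on_nonneg_power:
  fixes f :: "real \<Rightarrow> 'b::comm_monoid_mult"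
  assumes "f 0 = 1" and "\<And>s t. 0 \<le> s \<Longrightarrow> 0 \<le> t \<Longrightarrow> f (s + t) = f s * f t" and "0 \<le> x"
  shows "f (real n * x) = f x ^ n"
proof (induction n)
  case (Suc n)
  have "f (real (Suc n) * x) = f (real n * x + x)"
    by (simp add: algebra_simps)
  then show ?case
    using Suc assms by (simp add: mult.commute)
qed (use assms in simp)

lemma additive_on_nonneg_nat_mult:
  fixes g :: "real \<Rightarrow> real"
  assumes add: "\<And>s t. 0 \<le> s \<Longrightarrow> 0 \<le> t \<Longrightarrow> g (s + t) = g s + g t" and x: "0 \<le> x"
  shows "g (real n * x) = real n * g x"
proof -
  have "exp (g (real n * x)) = exp (g x) ^ n"
    by (rule multiplicative_on_nonneg_power) (use add[of 0 0] add x in \<open>simp_all add: exp_add\<close>)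
  then show ?thesis
    by (simp add: exp_of_nat_mult[symmetric])
qed

lemma fraction_bracket:
  fixes u \<delta> :: real
  assumes \<delta>: "0 < \<delta>" and u: "0 \<le> u"
  obtains n k :: nat
  where "0 < n" "1 / real n < \<delta>" "real k / real n \<le> u" "u < real (Suc k) / real n"
proof -
  obtain n :: nat where n_gt: "1 / \<delta> < n"
    using reals_Archimedean2 by blast
  have n_pos: "0 < n"
    using n_gt \<delta> by (metis divide_pos_pos less_trans of_nat_0_less_iff zero_less_one)
  have "1 / real n < \<delta>"
    using n_gt n_pos \<delta> by (simp add: pos_divide_less_eq mult.commute)
  moreover define k where "k = nat \<lfloor>real n * u\<rfloor>"
  have "real k \<le> real n * u" "real n * u < real k + 1"
    using u by (auto simp: k_def)
  ultimately show ?thesis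
    using n_pos by (intro that[of n k]) (simp_all add: divide_le_eq less_divide_eq mult.commute)
qed

lemma additive_on_nonneg_eq_0:
  fixes h :: "real \<Rightarrow> real"
  assumes add: "\<And>s t. 0 \<le> s \<Longrightarrow> 0 \<le> t \<Longrightarrow> h (s + t) = h s + h t" and h1: "h 1 = 0"
    and lower: "\<And>e. 0 < e \<Longrightarrow> eventually (\<lambda>s. -e < h s) (at_right 0)"
    and u: "0 \<le> u"
  shows "h u = 0"
proof -
  have h_frac: "h (real k / real n) = 0" if "0 < n" for k n
  proof -
    have "real n * h (1 / real n) = h 1"
      using additive_on_nonneg_nat_mult[of h, OF add, of "1 / real n" n] that by simp
    then show ?thesis
      using additive_on_nonneg_nat_mult[of h, OF add, of "1 / real n" k] that h1 by simp
  qed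
  have "\<bar>h u\<bar> < e" if e: "0 < e" for e
  proof -
    obtain \<delta> where \<delta>: "0 < \<delta>" "\<And>s. 0 < s \<Longrightarrow> s < \<delta> \<Longrightarrow> -e < h s"
      using lower[OF e] unfolding eventually_at_right_field by auto
    have small: "-e < h s" if "0 \<le> s" "s < \<delta>" for s
      using \<delta> add[of 0 0] e that by (cases "s = 0") auto
    obtain n k :: nat where n: "0 < n" "1 / real n < \<delta>"
      and q: "real k / real n \<le> u" and r: "u < real (Suc k) / real n"
      using fraction_bracket[OF \<delta>(1) u] .
    have r_eq: "real (Suc k) / real n = real k / real n + 1 / real n"
      by (simp add: add_divide_distrib)
    have "h u = h (u - real k / real n)"
      using add[of "real k / real n" "u - real k / real n"] q h_frac[OF n(1), of k] by simp
    moreover have "h u = - h (real (Suc k) / real n - u)"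
      using add[of u "real (Suc k) / real n - u"] r u h_frac[OF n(1), of "Suc k"] by simp
    ultimately show ?thesis
      using small[of "u - real k / real n"] small[of "real (Suc k) / real n - u"] q r r_eq n by auto
  qed
  then show ?thesis
    by (metis less_irrefl zero_less_abs_iff)
qed

lemma additive_on_nonneg_linear:
  fixes g :: "real \<Rightarrow> real"
  assumes add: "\<And>s t. 0 \<le> s \<Longrightarrow> 0 \<le> t \<Longrightarrow> g (s + t) = g s + g t"
    and lower: "\<And>e. 0 < e \<Longrightarrow> eventually (\<lambda>s. -e < g s) (at_right 0)"
    and u: "0 \<le> u"
  shows "g u = u * g 1"
proof -
  define h where "h x = g x - x * g 1" for x
  have "h u = 0"
  proof (rule additive_on_nonneg_eq_0[OF _ _ _ u])
    show "h (s + t) = h s + h t" if "0 \<le> s" "0 \<le> t" for s t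
      using add[OF that] by (simp add: h_def algebra_simps)
    show "h 1 = 0"
      by (simp add: h_def)
    show "eventually (\<lambda>s. -e < h s) (at_right 0)" if e: "0 < e" for e
    proof -
      have "((\<lambda>s. s * g 1) \<longlongrightarrow> 0) (at_right 0)"
        by (rule tendsto_mult_left_zero) (rule tendsto_ident_at)
      from tendstoD[OF this, of "e / 2"] have "eventually (\<lambda>s. \<bar>s * g 1\<bar> < e / 2) (at_right 0)"
        using e by simp
      moreover have "eventually (\<lambda>s. - (e / 2) < g s) (at_right 0)"
        using e by (intro lower) simp
      ultimately show ?thesis
        by eventually_elim (auto simp: h_def)
    qed
  qed
  then show ?thesis
    by (simp add: h_def)
qed

lemma multiplicative_ennreal_infinite:
  fixes f :: "real \<Rightarrow> ennreal"
  assumes f0: "f 0 = 1" and mult: "\<And>s t. 0 \<le> s \<Longrightarrow> 0 \<le> t \<Longrightarrow> f (s + t) = f s * f t"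
    and nonzero: "\<And>s. 0 \<le> s \<Longrightarrow> f s \<noteq> 0"
    and f1: "f 1 = \<infinity>" and u: "0 < u"
  shows "f u = \<infinity>"
proof -
  obtain n :: nat where n_gt: "1 / u < n"
    using reals_Archimedean2 by blast
  have n_pos: "0 < n"
    using n_gt u by (metis divide_pos_pos less_trans of_nat_0_less_iff zero_less_one)
  have n_u: "1 / real n < u"
    using n_gt n_pos u by (simp add: pos_divide_less_eq mult.commute)
  have "f (1 / real n) ^ n = \<infinity>"
    using multiplicative_on_nonneg_power[of f "1 / real n" n] f0 mult n_pos f1 by simp
  then have "f (1 / real n) = \<infinity>"
    by (simp add: power_eq_top_ennreal_iff)
  moreover have "f u = f (1 / real n) * f (u - 1 / real n)"
    using mult[of "1 / real n" "u - 1 / real n"] n_u by simp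
  ultimately show ?thesis
    using nonzero[of "u - 1 / real n"] n_u by (simp add: ennreal_top_mult)
qed

lemma multiplicative_ennreal_finite:
  fixes f :: "real \<Rightarrow> ennreal"
  assumes f0: "f 0 = 1" and mult: "\<And>s t. 0 \<le> s \<Longrightarrow> 0 \<le> t \<Longrightarrow> f (s + t) = f s * f t"
    and nonzero: "\<And>s. 0 \<le> s \<Longrightarrow> f s \<noteq> 0"
    and f1: "f 1 \<noteq> \<infinity>" and x: "0 \<le> x"
  shows "f x \<noteq> \<infinity>"
proof -
  obtain m :: nat where m: "x \<le> m"
    using real_arch_simple by blast
  have "f (real m) \<noteq> \<infinity>"
    using multiplicative_on_nonneg_power[of f 1 m] f0 mult f1 by (simp add: power_eq_top_ennreal_iff)
  moreover have "f (real m) = f x * f (real m - x)"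
    using mult[of x "real m - x"] m x by simp
  ultimately show ?thesis
    using nonzero[of "real m - x"] m by (auto simp: ennreal_mult_eq_top_iff)
qed

lemma multiplicative_ennreal_finite_eq_exp:
  fixes f :: "real \<Rightarrow> ennreal"
  assumes mult: "\<And>s t. 0 \<le> s \<Longrightarrow> 0 \<le> t \<Longrightarrow> f (s + t) = f s * f t"
    and nonzero: "\<And>s. 0 \<le> s \<Longrightarrow> f s \<noteq> 0"
    and finite: "\<And>s. 0 \<le> s \<Longrightarrow> f s \<noteq> \<infinity>"
    and lower: "\<And>c. c < 1 \<Longrightarrow> eventually (\<lambda>s. c < f s) (at_right 0)"
    and u: "0 \<le> u"
  shows "f u = ennreal (exp (u * ln (enn2real (f 1))))"
proof -
  define g where "g x = ln (enn2real (f x))" for x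
  have f_pos: "0 < enn2real (f x)" if "0 \<le> x" for x
    using finite[OF that] nonzero[OF that]
    by (simp add: enn2real_positive_iff less_top zero_less_iff_neq_zero)
  have f_eq: "f x = ennreal (exp (g x))" if "0 \<le> x" for x
    using finite[OF that] f_pos[OF that] by (simp add: g_def ennreal_enn2real_if)
  have "g u = u * g 1"
  proof (rule additive_on_nonneg_linear[OF _ _ u])
    show "g (s + t) = g s + g t" if "0 \<le> s" "0 \<le> t" for s t
      using mult[OF that] f_pos[OF that(1)] f_pos[OF that(2)]
      by (simp add: g_def enn2real_mult ln_mult)
    show "eventually (\<lambda>s. -e < g s) (at_right 0)" if "0 < e" for e
    proof -
      have "ennreal (exp (-e)) < 1"
        using that by (simp add: ennreal_1[symmetric] ennreal_less_iff del: ennreal_1)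
      from lower[OF this] show ?thesis
        unfolding eventually_at_right_field
        by (elim ex_forward) (auto simp: f_eq ennreal_less_iff)
    qed
  qed
  then have "f u = ennreal (exp (u * g 1))"
    using f_eq[OF u] by simp
  then show ?thesis
    by (simp only: g_def[of 1])
qed

lemma multiplicative_ennreal_eq_ennexp:
  fixes f :: "real \<Rightarrow> ennreal"
  assumes f0: "f 0 = 1" and mult: "\<And>s t. 0 \<le> s \<Longrightarrow> 0 \<le> t \<Longrightarrow> f (s + t) = f s * f t"
    and nonzero: "\<And>s. 0 \<le> s \<Longrightarrow> f s \<noteq> 0"
    and lower: "\<And>c. c < 1 \<Longrightarrow> eventually (\<lambda>s. c < f s) (at_right 0)"
    and u: "0 \<le> u"
  shows "f u = ennexp (ereal u * ennln (f 1))"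
proof (cases "u = 0")
  case True
  have "ereal 0 * ennln (f 1) = ereal 0"
    by (simp flip: zero_ereal_def)
  then show ?thesis
    using True by (simp add: f0)
next
  case False
  with u have u_pos: "0 < u"
    by (simp add: less_le)
  show ?thesis
  proof (cases "f 1 = \<infinity>")
    case True
    have "f u = \<infinity>"
      using f0 mult nonzero True u_pos by (rule multiplicative_ennreal_infinite)
    then show ?thesis
      using True u_pos by (simp add: ennln_def)
  next
    case False
    have finite: "f x \<noteq> \<infinity>" if "0 \<le> x" for x
      using f0 mult nonzero False that by (rule multiplicative_ennreal_finite)
    have "f u = ennreal (exp (u * ln (enn2real (f 1))))"
      using mult nonzero finite lower u by (rule multiplicative_ennreal_finite_eq_exp)
    then show ?thesis
      using False nonzero[of 1] by (simp add: ennln_def)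
  qed
qed

lemma tendsto_at_top_rescaled_of_deriv:
  fixes K :: "real \<Rightarrow> real"
  assumes K': "(K has_field_derivative D) (at 0)" and K0: "K 0 = 0"
  shows "((\<lambda>t. t * K (c / t)) \<longlongrightarrow> c * D) at_top"
proof (cases "c = 0")
  case False
  have "((\<lambda>t. c / t) \<longlongrightarrow> 0) at_top"
    by (intro tendsto_divide_0[OF tendsto_const] filterlim_at_top_imp_at_infinity filterlim_ident)
  moreover have "eventually (\<lambda>t. c / t \<noteq> 0) at_top"
    using eventually_gt_at_top[of 0] by eventually_elim (use False in simp)
  ultimately have "filterlim (\<lambda>t. c / t) (at 0) at_top"
    by (rule filterlim_atI)
  moreover have "((\<lambda>h. (K h - K 0) / (h - 0)) \<longlongrightarrow> D) (at 0)"
    using K' unfolding has_field_derivative_iff .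
  ultimately have "((\<lambda>t. c * ((K (c / t) - K 0) / (c / t - 0))) \<longlongrightarrow> c * D) at_top"
    by (intro tendsto_mult tendsto_const) (rule filterlim_compose)
  moreover have "eventually (\<lambda>t. c * ((K (c / t) - K 0) / (c / t - 0)) = t * K (c / t)) at_top"
    using eventually_gt_at_top[of 0] by eventually_elim (use False K0 in simp)
  ultimately show ?thesis
    by (rule Lim_transform_eventually)
qed (simp add: K0)

lemma abs_exp_minus_one_le: "\<bar>exp x - 1\<bar> \<le> \<bar>x\<bar> * exp \<bar>x\<bar>" for x :: real
proof (cases "0 \<le> x")
  case True
  have "(1 - x) * exp x \<le> exp (-x) * exp x"
    using exp_ge_add_one_self[of "-x"] by (intro mult_right_mono) auto
  then show ?thesis
    using True by (simp add: algebra_simps exp_minus_inverse)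
next
  case False
  have "1 + x \<le> exp x" and "-x \<le> -x * exp (-x)"
    using False by (auto intro: exp_ge_add_one_self)
  moreover have "\<bar>exp x - 1\<bar> = 1 - exp x" and "\<bar>x\<bar> * exp \<bar>x\<bar> = -x * exp (-x)"
    using False by simp_all
  ultimately show ?thesis
    by linarith
qed

lemma abs_exp_difference_quotient_le:
  fixes h y \<delta> :: real
  assumes "h \<noteq> 0" and "\<bar>h\<bar> \<le> \<delta>"
  shows "\<bar>(exp (h * y) - 1) / h\<bar> \<le> (exp (2 * \<delta> * y) + exp (- 2 * \<delta> * y)) / \<delta>"
proof -
  have \<delta>: "0 < \<delta>"
    using assms by linarith
  have "\<bar>(exp (h * y) - 1) / h\<bar> \<le> \<bar>h * y\<bar> * exp \<bar>h * y\<bar> / \<bar>h\<bar>"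
    unfolding abs_divide by (intro divide_right_mono abs_exp_minus_one_le) simp
  also have "\<dots> = \<bar>y\<bar> * exp (\<bar>h\<bar> * \<bar>y\<bar>)"
    using assms(1) by (simp add: abs_mult)
  also have "\<dots> \<le> exp (\<delta> * \<bar>y\<bar>) / \<delta> * exp (\<delta> * \<bar>y\<bar>)"
  proof (intro mult_mono)
    have "\<delta> * \<bar>y\<bar> \<le> exp (\<delta> * \<bar>y\<bar>)"
      using exp_ge_add_one_self[of "\<delta> * \<bar>y\<bar>"] by linarith
    then show "\<bar>y\<bar> \<le> exp (\<delta> * \<bar>y\<bar>) / \<delta>"
      using \<delta> by (simp add: field_simps)
  qed (use assms in \<open>auto intro: mult_right_mono\<close>)
  also have "\<dots> = exp (2 * \<delta> * \<bar>y\<bar>) / \<delta>"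
    by (simp add: exp_add[symmetric])
  also have "\<dots> \<le> (exp (2 * \<delta> * y) + exp (- 2 * \<delta> * y)) / \<delta>"
    using \<delta> by (intro divide_right_mono) (auto simp: abs_real_def)
  finally show ?thesis .
qed

lemma (in prob_space) tendsto_expectation_exp_difference_quotient:
  fixes Y :: "'a \<Rightarrow> real"
  assumes Y[measurable]: "Y \<in> borel_measurable M" and \<epsilon>: "0 < \<epsilon>"
    and integrable: "\<And>\<eta>. \<bar>\<eta>\<bar> < \<epsilon> \<Longrightarrow> integrable M (\<lambda>\<omega>. exp (\<eta> * Y \<omega>))"
  shows "((\<lambda>h. expectation (\<lambda>\<omega>. (exp (h * Y \<omega>) - 1) / h)) \<longlongrightarrow> expectation Y) (at 0)"
proof -
  define \<delta> where "\<delta> = \<epsilon> / 4"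
  have \<delta>: "0 < \<delta>" "2 * \<delta> < \<epsilon>"
    using \<epsilon> by (auto simp: \<delta>_def)
  define w where "w \<omega> = (exp (2 * \<delta> * Y \<omega>) + exp (- 2 * \<delta> * Y \<omega>)) / \<delta>" for \<omega>
  have w_int: "integrable M w"
    unfolding w_def using \<delta> integrable[of "2 * \<delta>"] integrable[of "- 2 * \<delta>"] by auto
  have "((\<lambda>h. expectation (\<lambda>\<omega>. (exp (h * Y \<omega>) - 1) / h)) \<longlongrightarrow> expectation Y) (at 0 within {-\<delta><..<\<delta>})"
    unfolding tendsto_at_iff_sequentially comp_def
  proof (intro allI impI)
    fix X :: "nat \<Rightarrow> real" assume X: "\<forall>i. X i \<in> {-\<delta><..<\<delta>} - {0}" and "X \<longlonglongrightarrow> 0"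
    then have X_at: "filterlim X (at 0) sequentially"
      by (auto simp: filterlim_at intro!: always_eventually)
    show "(\<lambda>i. expectation (\<lambda>\<omega>. (exp (X i * Y \<omega>) - 1) / X i)) \<longlonglongrightarrow> expectation Y"
    proof (rule integral_dominated_convergence[where w=w])
      show "AE \<omega> in M. (\<lambda>i. (exp (X i * Y \<omega>) - 1) / X i) \<longlonglongrightarrow> Y \<omega>"
      proof (intro AE_I2)
        fix \<omega>
        have "((\<lambda>h. exp (h * Y \<omega>)) has_field_derivative exp (0 * Y \<omega>) * Y \<omega>) (at 0)"
          by (auto intro!: derivative_eq_intros)
        then have "((\<lambda>h. (exp (h * Y \<omega>) - exp (0 * Y \<omega>)) / (h - 0)) \<longlongrightarrow> Y \<omega>) (at 0)"
          unfolding has_field_derivative_iff by simp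
        from filterlim_compose[OF this X_at] show "(\<lambda>i. (exp (X i * Y \<omega>) - 1) / X i) \<longlonglongrightarrow> Y \<omega>"
          by simp
      qed
      show "AE \<omega> in M. norm ((exp (X i * Y \<omega>) - 1) / X i) \<le> w \<omega>" for i
      proof (intro AE_I2)
        fix \<omega>
        have "X i \<noteq> 0" "\<bar>X i\<bar> \<le> \<delta>"
          using X[rule_format, of i] by auto
        then show "norm ((exp (X i * Y \<omega>) - 1) / X i) \<le> w \<omega>"
          unfolding w_def real_norm_def by (rule abs_exp_difference_quotient_le)
      qed
    qed (measurable, fact w_int)
  qed
  moreover have "at (0::real) within {-\<delta><..<\<delta>} = at 0"
    using \<delta> by (intro at_within_open) auto
  ultimately show ?thesis
    by simp
qed

lemma (in prob_space) has_field_derivative_expectation_exp: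
  fixes Y :: "'a \<Rightarrow> real"
  assumes Y: "Y \<in> borel_measurable M" and \<epsilon>: "0 < \<epsilon>"
    and integrable: "\<And>\<eta>. \<bar>\<eta>\<bar> < \<epsilon> \<Longrightarrow> integrable M (\<lambda>\<omega>. exp (\<eta> * Y \<omega>))"
  shows "((\<lambda>\<eta>. expectation (\<lambda>\<omega>. exp (\<eta> * Y \<omega>))) has_field_derivative expectation Y) (at 0)"
  unfolding has_field_derivative_iff
proof (rule Lim_transform_eventually[OF tendsto_expectation_exp_difference_quotient[OF assms]])
  show "eventually (\<lambda>h. expectation (\<lambda>\<omega>. (exp (h * Y \<omega>) - 1) / h)
      = (expectation (\<lambda>\<omega>. exp (h * Y \<omega>)) - expectation (\<lambda>\<omega>. exp (0 * Y \<omega>))) / (h - 0)) (at 0)"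
    using tendstoD[OF tendsto_ident_at \<epsilon>, of 0 UNIV]
  proof eventually_elim
    case (elim h)
    then have "integrable M (\<lambda>\<omega>. exp (h * Y \<omega>))"
      by (intro integrable) (simp add: dist_real_def)
    then show ?case
      by (simp add: prob_space Bochner_Integration.integral_diff[OF _ integrable_const])
  qed
qed

lemma (in prob_space) has_field_derivative_ln_expectation_exp:
  fixes Y :: "'a \<Rightarrow> real"
  assumes "Y \<in> borel_measurable M" and "0 < \<epsilon>"
    and "\<And>\<eta>. \<bar>\<eta>\<bar> < \<epsilon> \<Longrightarrow> integrable M (\<lambda>\<omega>. exp (\<eta> * Y \<omega>))"
  shows "((\<lambda>\<eta>. ln (expectation (\<lambda>\<omega>. exp (\<eta> * Y \<omega>)))) has_field_derivative expectation Y) (at 0)"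
  using DERIV_chain2[OF DERIV_ln has_field_derivative_expectation_exp[OF assms]] by (simp add: prob_space)

lemma (in prob_space) ennln_nn_integral_exp:
  assumes int: "integrable M (\<lambda>\<omega>. exp (f \<omega>))"
  shows "ennln (\<integral>\<^sup>+\<omega>. ennreal (exp (f \<omega>)) \<partial>M) = ereal (ln (expectation (\<lambda>\<omega>. exp (f \<omega>))))"
proof -
  have [measurable]: "(\<lambda>\<omega>. exp (f \<omega>)) \<in> borel_measurable M"
    using int by (rule borel_measurable_integrable)
  have eq: "(\<integral>\<^sup>+\<omega>. ennreal (exp (f \<omega>)) \<partial>M) = ennreal (expectation (\<lambda>\<omega>. exp (f \<omega>)))"
    by (rule nn_integral_eq_integral[OF int]) simp
  have "(\<integral>\<^sup>+\<omega>. ennreal (exp (f \<omega>)) \<partial>M) \<noteq> 0"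
    by (subst nn_integral_0_iff_AE) (simp_all add: AE_False)
  moreover have "0 \<le> expectation (\<lambda>\<omega>. exp (f \<omega>))"
    by (rule Bochner_Integration.integral_nonneg) simp
  ultimately have "0 < expectation (\<lambda>\<omega>. exp (f \<omega>))"
    unfolding eq by (simp add: order_less_le)
  then show ?thesis
    by (simp add: eq ennln_def)
qed

definition mgf :: "'a measure \<Rightarrow> ('a \<Rightarrow> 'b::real_inner) \<Rightarrow> 'b \<Rightarrow> ennreal" where
  "mgf M Y \<theta> = (\<integral>\<^sup>+\<omega>. ennreal (exp (\<theta> \<bullet> Y \<omega>)) \<partial>M)"

lemma (in prob_space) mgf_nonzero:
  fixes Y :: "'a \<Rightarrow> 'b::euclidean_space"
  assumes [measurable]: "Y \<in> borel_measurable M"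
  shows "mgf M Y \<theta> \<noteq> 0"
proof
  assume "mgf M Y \<theta> = 0"
  then have "AE \<omega> in M. ennreal (exp (\<theta> \<bullet> Y \<omega>)) = 0"
    unfolding mgf_def by (subst (asm) nn_integral_0_iff_AE) auto
  then show False
    by (simp add: AE_False)
qed

lemma mgf_distr_cong:
  fixes Y Z :: "'a \<Rightarrow> 'b::euclidean_space"
  assumes [measurable]: "Y \<in> borel_measurable M" "Z \<in> borel_measurable M"
    and "distr M borel Y = distr M borel Z"
  shows "mgf M Y \<theta> = mgf M Z \<theta>"
proof -
  have "mgf M Y \<theta> = (\<integral>\<^sup>+x. ennreal (exp (\<theta> \<bullet> x)) \<partial>distr M borel Y)"
    by (simp add: mgf_def nn_integral_distr)
  also have "\<dots> = mgf M Z \<theta>"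
    by (simp add: assms(3) mgf_def nn_integral_distr)
  finally show ?thesis .
qed

lemma levy_processD:
  assumes "levy_process M X"
  shows levy_process_prob_space: "prob_space M"
    and levy_process_measurable: "0 \<le> t \<Longrightarrow> X t \<in> borel_measurable M"
    and levy_process_AE_zero: "AE \<omega> in M. X 0 \<omega> = 0"
    and levy_process_indep_increments: "0 \<le> \<tau> 0 \<Longrightarrow> (\<forall>i<n. \<tau> i < \<tau> (Suc i)) \<Longrightarrow>
          prob_space.indep_vars M (\<lambda>_. borel) (\<lambda>i \<omega>. X (\<tau> (Suc i)) \<omega> - X (\<tau> i) \<omega>) {..<n}"
    and levy_process_stationary: "0 \<le> s \<Longrightarrow> s \<le> t \<Longrightarrow>
          distr M borel (\<lambda>\<omega>. X t \<omega> - X s \<omega>) = distr M borel (X (t - s))"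
    and levy_process_AE_right_continuous: "AE \<omega> in M. \<forall>t\<ge>0. continuous (at_right t) (\<lambda>s. X s \<omega>)"
  using assms unfolding levy_process_def by auto

lemma mgf_levy_0:
  assumes "levy_process M X"
  shows "mgf M (X 0) \<theta> = 1"
proof -
  interpret prob_space M
    using assms by (rule levy_process_prob_space)
  have "mgf M (X 0) \<theta> = (\<integral>\<^sup>+\<omega>. 1 \<partial>M)"
    unfolding mgf_def using levy_process_AE_zero[OF assms] by (intro nn_integral_cong_AE) auto
  then show ?thesis
    by (simp add: emeasure_space_1)
qed

lemma mgf_levy_add:
  assumes X: "levy_process M X" and "0 \<le> s" "0 \<le> t"
  shows "mgf M (X (s + t)) \<theta> = mgf M (X s) \<theta> * mgf M (X t) \<theta>"
proof -
  interpret prob_space M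
    using X by (rule levy_process_prob_space)
  note X_meas[measurable] = levy_process_measurable[OF X]
  consider "s = 0" | "t = 0" | "0 < s" "0 < t"
    using assms by linarith
  then show ?thesis
  proof cases
    case 3
    define \<tau> :: "nat \<Rightarrow> real" where "\<tau> i = (if i = 0 then 0 else if i = 1 then s else s + t)" for i
    define incr where "incr i \<omega> = ennreal (exp (\<theta> \<bullet> (X (\<tau> (Suc i)) \<omega> - X (\<tau> i) \<omega>)))" for i \<omega>
    have "indep_vars (\<lambda>_. borel) (\<lambda>i \<omega>. X (\<tau> (Suc i)) \<omega> - X (\<tau> i) \<omega>) {..<2}"
      using levy_process_indep_increments[OF X, of \<tau> 2] 3 by (auto simp: \<tau>_def less_2_cases_iff)
    then have indep: "indep_vars (\<lambda>_. borel) incr {..<2}"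
      unfolding incr_def by (rule indep_vars_compose2) auto
    have "mgf M (X (s + t)) \<theta> = (\<integral>\<^sup>+\<omega>. (\<Prod>i\<in>{..<2}. incr i \<omega>) \<partial>M)"
      unfolding mgf_def using levy_process_AE_zero[OF X]
      by (intro nn_integral_cong_AE)
         (auto simp: incr_def \<tau>_def lessThan_nat_numeral numeral_2_eq_2 inner_diff_right
                     exp_add[symmetric] ennreal_mult[symmetric])
    also have "\<dots> = (\<Prod>i\<in>{..<2}. \<integral>\<^sup>+\<omega>. incr i \<omega> \<partial>M)"
      by (rule indep_vars_nn_integral[OF _ indep]) auto
    also have "\<dots> = mgf M (\<lambda>\<omega>. X s \<omega> - X 0 \<omega>) \<theta> * mgf M (\<lambda>\<omega>. X (s + t) \<omega> - X s \<omega>) \<theta>"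
      by (simp add: incr_def mgf_def \<tau>_def lessThan_nat_numeral numeral_2_eq_2)
    also have "mgf M (\<lambda>\<omega>. X s \<omega> - X 0 \<omega>) \<theta> = mgf M (X s) \<theta>"
      unfolding mgf_def using levy_process_AE_zero[OF X] by (intro nn_integral_cong_AE) auto
    also have "mgf M (\<lambda>\<omega>. X (s + t) \<omega> - X s \<omega>) \<theta> = mgf M (X t) \<theta>"
      using 3 by (intro mgf_distr_cong) (auto simp: levy_process_stationary[OF X])
    finally show ?thesis .
  qed (simp_all add: mgf_levy_0[OF X])
qed

lemma mgf_levy_lower_at_0:
  assumes X: "levy_process M X" and c: "c < 1"
  shows "eventually (\<lambda>s. c < mgf M (X s) \<theta>) (at_right 0)"
proof (rule sequentially_imp_eventually_at_right[OF zero_less_one])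
  interpret prob_space M
    using X by (rule levy_process_prob_space)
  fix s :: "nat \<Rightarrow> real"
  assume s_pos: "\<And>n. 0 < s n" and "s \<longlonglongrightarrow> 0"
  then have s_at: "filterlim s (at_right 0) sequentially"
    unfolding filterlim_at by (auto intro!: always_eventually simp: less_imp_neq[symmetric])
  have [measurable]: "X (s n) \<in> borel_measurable M" for n
    using s_pos[of n] by (intro levy_process_measurable[OF X]) simp
  have "AE \<omega> in M. (\<lambda>n. ennreal (exp (\<theta> \<bullet> X (s n) \<omega>))) \<longlonglongrightarrow> 1"
    using levy_process_AE_zero[OF X] levy_process_AE_right_continuous[OF X]
  proof eventually_elim
    case (elim \<omega>)
    then have "((\<lambda>u. X u \<omega>) \<longlongrightarrow> 0) (at_right 0)"
      by (auto simp: continuous_within)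
    from filterlim_compose[OF this s_at] have "(\<lambda>n. X (s n) \<omega>) \<longlonglongrightarrow> 0" .
    then show ?case
      by (auto intro!: tendsto_eq_intros)
  qed
  then have "1 = (\<integral>\<^sup>+\<omega>. liminf (\<lambda>n. ennreal (exp (\<theta> \<bullet> X (s n) \<omega>))) \<partial>M)"
    by (subst nn_integral_cong_AE[where v="\<lambda>_. 1"]) (auto simp: lim_imp_Liminf emeasure_space_1)
  also have "\<dots> \<le> liminf (\<lambda>n. mgf M (X (s n)) \<theta>)"
    unfolding mgf_def by (intro nn_integral_liminf) measurable
  finally show "eventually (\<lambda>n. c < mgf M (X (s n)) \<theta>) sequentially"
    using c by (intro less_LiminfD) auto
qed

lemma mgf_levy:
  assumes X: "levy_process M X" and u: "0 \<le> u"
  shows "mgf M (X u) \<theta> = ennexp (ereal u * ennln (mgf M (X 1) \<theta>))"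
proof (rule multiplicative_ennreal_eq_ennexp[OF _ _ _ _ u])
  interpret prob_space M
    using X by (rule levy_process_prob_space)
  show "mgf M (X 0) \<theta> = 1"
    using X by (rule mgf_levy_0)
  show "mgf M (X (s + t)) \<theta> = mgf M (X s) \<theta> * mgf M (X t) \<theta>" if "0 \<le> s" "0 \<le> t" for s t
    using X that by (rule mgf_levy_add)
  show "mgf M (X s) \<theta> \<noteq> 0" if "0 \<le> s" for s
    using levy_process_measurable[OF X that] by (rule mgf_nonzero)
  show "eventually (\<lambda>s. c < mgf M (X s) \<theta>) (at_right 0)" if "c < 1" for c
    using X that by (rule mgf_levy_lower_at_0)
qed

definition process_measure :: "'a measure \<Rightarrow> (real \<Rightarrow> 'a \<Rightarrow> 'b::topological_space) \<Rightarrow> 'a measure" where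
  "process_measure M X = sigma (space M) (\<Union>t\<in>{0..}. {X t -` A \<inter> space M | A. A \<in> sets borel})"

lemma sets_process_measure: "sets (process_measure M X) = process_sigma M X"
  unfolding process_measure_def process_sigma_def by (rule sets_measure_of) auto

lemma space_process_measure: "space (process_measure M X) = space M"
  unfolding process_measure_def by (rule space_measure_of_conv)

lemma measurable_process_measure:
  assumes "0 \<le> t"
  shows "X t \<in> borel_measurable (process_measure M X)"
proof (rule measurableI)
  show "X t -` A \<inter> space (process_measure M X) \<in> sets (process_measure M X)" if "A \<in> sets borel" for A
    unfolding sets_process_measure space_process_measure process_sigma_def
    using assms that by (intro sigma_sets.Basic) auto
qed simp

lemma measurable_id_process_measure:
  assumes "\<And>t. 0 \<le> t \<Longrightarrow> X t \<in> borel_measurable M"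
  shows "(\<lambda>\<omega>. \<omega>) \<in> measurable M (process_measure M X)"
  unfolding process_measure_def
  by (rule measurable_measure_of) (auto intro: measurable_sets assms)

definition dyadic_above :: "nat \<Rightarrow> real \<Rightarrow> real" where
  "dyadic_above n u = real (nat \<lfloor>2 ^ n * u\<rfloor> + 1) / 2 ^ n"

lemma filterlim_dyadic_above:
  assumes "0 \<le> u"
  shows "filterlim (\<lambda>n. dyadic_above n u) (at_right u) sequentially"
proof -
  have gt: "u < dyadic_above n u" for n
  proof -
    have "2 ^ n * u < real (nat \<lfloor>2 ^ n * u\<rfloor> + 1)"
      using assms by linarith
    then show ?thesis
      unfolding dyadic_above_def by (simp add: pos_less_divide_eq mult.commute)
  qed
  have le: "dyadic_above n u \<le> u + 1 / 2 ^ n" for n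
  proof -
    have "real (nat \<lfloor>2 ^ n * u\<rfloor>) \<le> 2 ^ n * u"
      using assms by (simp add: of_nat_floor)
    then have "real (nat \<lfloor>2 ^ n * u\<rfloor> + 1) \<le> (u + 1 / 2 ^ n) * 2 ^ n"
      by (simp add: algebra_simps)
    then show ?thesis
      unfolding dyadic_above_def by (simp add: pos_divide_le_eq del: of_nat_Suc)
  qed
  have "(\<lambda>n. u + 1 / 2 ^ n) \<longlonglongrightarrow> u + 0"
    by (intro tendsto_add tendsto_const LIMSEQ_divide_realpow_zero) simp_all
  then have upper: "(\<lambda>n. u + 1 / 2 ^ n) \<longlonglongrightarrow> u"
    by simp
  have "\<forall>\<^sub>F n in sequentially. u \<le> dyadic_above n u"
    using gt by (simp add: less_imp_le)
  from tendsto_sandwich[OF this _ tendsto_const upper]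
  have "(\<lambda>n. dyadic_above n u) \<longlonglongrightarrow> u"
    using le by simp
  then show ?thesis
    using gt unfolding filterlim_at by (simp add: less_imp_neq[symmetric])
qed

(* Sampling X at the dyadic times just above t makes the approximants countably-valued in time,
   hence jointly measurable in (omega, t); by right-continuity the limit is a version of X. *)
definition joint_version :: "(real \<Rightarrow> 'a \<Rightarrow> 'b::t2_space) \<Rightarrow> 'a \<times> real \<Rightarrow> 'b" where
  "joint_version X z = lim (\<lambda>n. X (dyadic_above n (snd z)) (fst z))"

lemma joint_version_measurable:
  fixes X :: "real \<Rightarrow> 'a \<Rightarrow> 'b::euclidean_space"
  shows "joint_version X \<in> borel_measurable (process_measure M X \<Otimes>\<^sub>M borel)"
proof -
  have "(\<lambda>z. X (dyadic_above n (snd z)) (fst z)) \<in> borel_measurable (process_measure M X \<Otimes>\<^sub>M borel)" for n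
    unfolding dyadic_above_def
  proof (rule measurable_compose_countable[where f="\<lambda>k z. X (real (k + 1) / 2 ^ n) (fst z)"])
    show "(\<lambda>z. X (real (k + 1) / 2 ^ n) (fst z)) \<in> borel_measurable (process_measure M X \<Otimes>\<^sub>M borel)" for k
      by (intro measurable_compose[OF measurable_fst measurable_process_measure]) simp
  qed measurable
  then show ?thesis
    unfolding joint_version_def by (rule borel_measurable_lim_metric)
qed

lemma joint_version_eq:
  assumes "continuous (at_right u) (\<lambda>s. X s \<omega>)" and "0 \<le> u"
  shows "joint_version X (\<omega>, u) = X u \<omega>"
proof -
  have "((\<lambda>s. X s \<omega>) \<longlongrightarrow> X u \<omega>) (at_right u)"
    using assms(1) by (simp add: continuous_within)
  from filterlim_compose[OF this filterlim_dyadic_above[OF assms(2)]]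
  show ?thesis
    unfolding joint_version_def by (simp add: limI)
qed

lemma (in prob_space) distr_pair_eq_pair_measure:
  assumes X: "random_variable S X" and Y: "random_variable T Y"
    and X_sets: "\<And>A. A \<in> sets S \<Longrightarrow> X -` A \<inter> space M \<in> \<A>"
    and Y_sets: "\<And>B. B \<in> sets T \<Longrightarrow> Y -` B \<inter> space M \<in> \<B>"
    and indep: "indep_set \<A> \<B>"
  shows "distr M S X \<Otimes>\<^sub>M distr M T Y = distr M (S \<Otimes>\<^sub>M T) (\<lambda>\<omega>. (X \<omega>, Y \<omega>))"
proof (rule pair_measure_eqI)
  interpret X: prob_space "distr M S X"
    using X by (rule prob_space_distr)
  interpret Y: prob_space "distr M T Y"
    using Y by (rule prob_space_distr)
  show "sigma_finite_measure (distr M S X)" "sigma_finite_measure (distr M T Y)" ..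
  fix A B assume A: "A \<in> sets (distr M S X)" and B: "B \<in> sets (distr M T Y)"
  have XY: "(\<lambda>\<omega>. (X \<omega>, Y \<omega>)) \<in> measurable M (S \<Otimes>\<^sub>M T)"
    using X Y by (rule measurable_Pair)
  have "emeasure (distr M (S \<Otimes>\<^sub>M T) (\<lambda>\<omega>. (X \<omega>, Y \<omega>))) (A \<times> B)
      = emeasure M ((X -` A \<inter> space M) \<inter> (Y -` B \<inter> space M))"
    using A B by (subst emeasure_distr[OF XY]) (auto intro!: arg_cong[where f="emeasure M"])
  also have "\<dots> = emeasure M (X -` A \<inter> space M) * emeasure M (Y -` B \<inter> space M)"
    using indep_setD[OF indep X_sets Y_sets] A B
    by (simp add: emeasure_eq_measure ennreal_mult)
  also have "\<dots> = emeasure (distr M S X) A * emeasure (distr M T Y) B"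
    using A B X Y by (simp add: emeasure_distr)
  finally show "emeasure (distr M S X) A * emeasure (distr M T Y) B
      = emeasure (distr M (S \<Otimes>\<^sub>M T) (\<lambda>\<omega>. (X \<omega>, Y \<omega>))) (A \<times> B)"
    by simp
qed simp

lemma (in prob_space) nn_integral_indep_pair:
  assumes X: "random_variable S X" and Y: "random_variable T Y"
    and X_sets: "\<And>A. A \<in> sets S \<Longrightarrow> X -` A \<inter> space M \<in> \<A>"
    and Y_sets: "\<And>B. B \<in> sets T \<Longrightarrow> Y -` B \<inter> space M \<in> \<B>"
    and indep: "indep_set \<A> \<B>"
    and h[measurable]: "h \<in> borel_measurable (S \<Otimes>\<^sub>M T)"
  shows "(\<integral>\<^sup>+\<omega>. h (X \<omega>, Y \<omega>) \<partial>M) = (\<integral>\<^sup>+\<omega>. \<integral>\<^sup>+\<omega>'. h (X \<omega>', Y \<omega>) \<partial>M \<partial>M)"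
proof -
  interpret X: prob_space "distr M S X"
    using X by (rule prob_space_distr)
  interpret Y: prob_space "distr M T Y"
    using Y by (rule prob_space_distr)
  interpret XY: pair_prob_space "distr M S X" "distr M T Y" ..
  define g where "g y = (\<integral>\<^sup>+x. h (x, y) \<partial>distr M S X)" for y
  have g_meas: "g \<in> borel_measurable T"
    unfolding g_def by measurable
  have g_eq: "g y = (\<integral>\<^sup>+\<omega>'. h (X \<omega>', y) \<partial>M)" if "y \<in> space T" for y
  proof -
    have "(\<lambda>x. h (x, y)) \<in> borel_measurable S"
      using h that by (rule measurable_Pair1)
    then show ?thesis
      using nn_integral_distr[OF X, of "\<lambda>x. h (x, y)"] by (simp add: g_def)
  qed
  have "(\<integral>\<^sup>+\<omega>. h (X \<omega>, Y \<omega>) \<partial>M) = (\<integral>\<^sup>+z. h z \<partial>distr M (S \<Otimes>\<^sub>M T) (\<lambda>\<omega>. (X \<omega>, Y \<omega>)))"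
    using X Y by (simp add: nn_integral_distr)
  also have "\<dots> = (\<integral>\<^sup>+z. h z \<partial>(distr M S X \<Otimes>\<^sub>M distr M T Y))"
    by (simp add: distr_pair_eq_pair_measure[OF X Y X_sets Y_sets indep])
  also have "\<dots> = (\<integral>\<^sup>+y. g y \<partial>distr M T Y)"
    unfolding g_def by (rule XY.nn_integral_snd[symmetric]) simp
  also have "\<dots> = (\<integral>\<^sup>+\<omega>. g (Y \<omega>) \<partial>M)"
    using g_meas by (intro nn_integral_distr[OF Y]) simp
  also have "\<dots> = (\<integral>\<^sup>+\<omega>. \<integral>\<^sup>+\<omega>'. h (X \<omega>', Y \<omega>) \<partial>M \<partial>M)"
    using Y by (intro nn_integral_cong) (simp add: g_eq measurable_space)
  finally show ?thesis .
qed

lemma (in prob_space) nn_integral_process_at_independent_time: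
  fixes X :: "real \<Rightarrow> 'a \<Rightarrow> 'b::euclidean_space" and U :: "'a \<Rightarrow> real"
  assumes X_meas: "\<And>t. 0 \<le> t \<Longrightarrow> X t \<in> borel_measurable M"
    and X_right_cont: "AE \<omega> in M. \<forall>t\<ge>0. continuous (at_right t) (\<lambda>s. X s \<omega>)"
    and U_meas: "U \<in> borel_measurable M" and U_nonneg: "AE \<omega> in M. 0 \<le> U \<omega>"
    and U_sets: "\<And>A. A \<in> sets borel \<Longrightarrow> U -` A \<inter> space M \<in> \<B>"
    and indep: "indep_set (process_sigma M X) \<B>"
    and f_meas[measurable]: "f \<in> borel_measurable borel"
  shows "(\<integral>\<^sup>+\<omega>. f (X (U \<omega>) \<omega>) \<partial>M) = (\<integral>\<^sup>+\<omega>. \<integral>\<^sup>+\<omega>'. f (X (U \<omega>) \<omega>') \<partial>M \<partial>M)"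
proof -
  let ?P = "process_measure M X"
  have id_meas: "(\<lambda>\<omega>. \<omega>) \<in> measurable M ?P"
    using X_meas by (rule measurable_id_process_measure)
  have id_sets: "(\<lambda>\<omega>. \<omega>) -` A \<inter> space M \<in> process_sigma M X" if "A \<in> sets ?P" for A
    using that sets.sets_into_space[OF that] by (simp add: sets_process_measure space_process_measure Int_absorb2)
  have h_meas: "(\<lambda>z. f (joint_version X z)) \<in> borel_measurable (?P \<Otimes>\<^sub>M borel)"
    using joint_version_measurable[of X M] by measurable
  have version: "AE \<omega> in M. \<forall>u\<ge>0. f (joint_version X (\<omega>, u)) = f (X u \<omega>)"
    using X_right_cont by eventually_elim (simp add: joint_version_eq)
  have "(\<integral>\<^sup>+\<omega>. f (X (U \<omega>) \<omega>) \<partial>M) = (\<integral>\<^sup>+\<omega>. f (joint_version X (\<omega>, U \<omega>)) \<partial>M)"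
    using version U_nonneg by (intro nn_integral_cong_AE) auto
  also have "\<dots> = (\<integral>\<^sup>+\<omega>. \<integral>\<^sup>+\<omega>'. f (joint_version X (\<omega>', U \<omega>)) \<partial>M \<partial>M)"
    by (rule nn_integral_indep_pair[OF id_meas U_meas id_sets U_sets indep h_meas])
  also have "\<dots> = (\<integral>\<^sup>+\<omega>. \<integral>\<^sup>+\<omega>'. f (X (U \<omega>) \<omega>') \<partial>M \<partial>M)"
    using U_nonneg
  proof (intro nn_integral_cong_AE, eventually_elim)
    case (elim \<omega>)
    show ?case
      using version elim by (intro nn_integral_cong_AE) auto
  qed
  finally show ?thesis .
qed

lemma mgf_levy_at_independent_time:
  fixes X :: "real \<Rightarrow> 'a \<Rightarrow> 'b::euclidean_space"
  assumes X: "levy_process M X"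
    and U_meas: "U \<in> borel_measurable M" and U_nonneg: "AE \<omega> in M. 0 \<le> U \<omega>"
    and U_sets: "\<And>A. A \<in> sets borel \<Longrightarrow> U -` A \<inter> space M \<in> \<B>"
    and indep: "prob_space.indep_set M (process_sigma M X) \<B>"
  shows "mgf M (\<lambda>\<omega>. X (U \<omega>) \<omega>) \<theta> = (\<integral>\<^sup>+\<omega>. ennexp (ereal (U \<omega>) * ennln (mgf M (X 1) \<theta>)) \<partial>M)"
proof -
  interpret prob_space M
    using X by (rule levy_process_prob_space)
  have f_meas: "(\<lambda>x. ennreal (exp (\<theta> \<bullet> x))) \<in> borel_measurable borel"
    by measurable
  have "mgf M (\<lambda>\<omega>. X (U \<omega>) \<omega>) \<theta> = (\<integral>\<^sup>+\<omega>. mgf M (X (U \<omega>)) \<theta> \<partial>M)"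
    unfolding mgf_def
    by (rule nn_integral_process_at_independent_time
          [OF levy_process_measurable[OF X] levy_process_AE_right_continuous[OF X] U_meas U_nonneg U_sets indep f_meas])
  also have "\<dots> = (\<integral>\<^sup>+\<omega>. ennexp (ereal (U \<omega>) * ennln (mgf M (X 1) \<theta>)) \<partial>M)"
  proof (rule nn_integral_cong_AE)
    show "AE \<omega> in M. mgf M (X (U \<omega>)) \<theta> = ennexp (ereal (U \<omega>) * ennln (mgf M (X 1) \<theta>))"
      using U_nonneg by eventually_elim (rule mgf_levy[OF X])
  qed
  finally show ?thesis .
qed

lemma process_sigma_vimage:
  assumes "0 \<le> t" and "g \<in> borel_measurable borel" and "A \<in> sets borel"
  shows "(\<lambda>\<omega>. g (X t \<omega>)) -` A \<inter> space M \<in> process_sigma M X"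
proof -
  have "X t -` (g -` A) \<inter> space M \<in> process_sigma M X"
    unfolding process_sigma_def using assms measurable_sets_borel[OF assms(2,3)]
    by (intro sigma_sets.Basic) blast
  moreover have "(\<lambda>\<omega>. g (X t \<omega>)) -` A \<inter> space M = X t -` (g -` A) \<inter> space M"
    by auto
  ultimately show ?thesis
    by simp
qed

lemma nn_integral_ennexp_times_infinity:
  assumes Y_meas[measurable]: "Y \<in> borel_measurable M" and Y_nonneg: "AE \<omega> in M. 0 \<le> Y \<omega>"
    and not_zero: "\<not> (AE \<omega> in M. Y \<omega> = 0)"
  shows "(\<integral>\<^sup>+\<omega>. ennexp (ereal (Y \<omega>) * \<infinity>) \<partial>M) = \<infinity>"
proof -
  have "(\<integral>\<^sup>+\<omega>. ennexp (ereal (Y \<omega>) * \<infinity>) \<partial>M) = (\<integral>\<^sup>+\<omega>. (if 0 < Y \<omega> then \<infinity> else 1) \<partial>M)"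
    using Y_nonneg by (intro nn_integral_cong_AE) (auto elim!: eventually_mono)
  also have "\<dots> = \<infinity>"
  proof (rule ccontr)
    assume "(\<integral>\<^sup>+\<omega>. (if 0 < Y \<omega> then \<infinity> else 1) \<partial>M) \<noteq> \<infinity>"
    then have "AE \<omega> in M. (if 0 < Y \<omega> then \<infinity> else (1::ennreal)) \<noteq> \<infinity>"
      by (intro nn_integral_PInf_AE) measurable
    then have "AE \<omega> in M. Y \<omega> = 0"
      using Y_nonneg by eventually_elim (auto split: if_splits)
    with not_zero show False ..
  qed
  finally show ?thesis .
qed

lemma subordinator_levy_process: "subordinator M V \<Longrightarrow> levy_process M V"
  unfolding subordinator_def by simp

lemma subordinator_AE_le:
  assumes "subordinator M V" and "0 \<le> s" and "s \<le> t"
  shows "AE \<omega> in M. V s \<omega> \<le> V t \<omega>"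
proof -
  have "AE \<omega> in M. mono_on {0..} (\<lambda>t. V t \<omega>)"
    using assms(1) unfolding subordinator_def by simp
  then show ?thesis
  proof eventually_elim
    case (elim \<omega>)
    show ?case
      using assms(2,3) by (intro mono_onD[OF elim]) auto
  qed
qed

lemma subordinator_AE_nonneg:
  assumes V: "subordinator M V" and "0 \<le> t"
  shows "AE \<omega> in M. 0 \<le> V t \<omega>"
  using subordinator_AE_le[OF V order_refl \<open>0 \<le> t\<close>] levy_process_AE_zero[OF subordinator_levy_process[OF V]]
  by eventually_elim simp

lemma subordinator_not_AE_zero:
  assumes V: "subordinator M V" and mean_pos: "0 < (\<integral>\<omega>. V 1 \<omega> \<partial>M)" and t: "1 \<le> t"
  shows "\<not> (AE \<omega> in M. V t \<omega> = 0)"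
proof
  assume "AE \<omega> in M. V t \<omega> = 0"
  with subordinator_AE_le[OF V zero_le_one t] subordinator_AE_nonneg[OF V zero_le_one]
  have "AE \<omega> in M. V 1 \<omega> = 0"
    by eventually_elim simp
  then have "(\<integral>\<omega>. V 1 \<omega> \<partial>M) = 0"
    by (simp add: integral_cong_AE integral_eq_zero_AE)
  with mean_pos show False
    by simp
qed

lemma nn_integral_ennexp_subordinator_infinity:
  assumes V: "subordinator M V" and mean_pos: "0 < (\<integral>\<omega>. V 1 \<omega> \<partial>M)" and t: "1 \<le> t"
  shows "(\<integral>\<^sup>+\<omega>. ennexp (ereal (V t \<omega> / t) * \<infinity>) \<partial>M) = \<infinity>"
proof (rule nn_integral_ennexp_times_infinity)
  have [measurable]: "V t \<in> borel_measurable M"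
    using t by (intro levy_process_measurable[OF subordinator_levy_process[OF V]]) simp
  show "(\<lambda>\<omega>. V t \<omega> / t) \<in> borel_measurable M"
    by measurable
  show "AE \<omega> in M. 0 \<le> V t \<omega> / t"
    using subordinator_AE_nonneg[OF V, of t] t by (auto elim!: eventually_mono)
  show "\<not> (AE \<omega> in M. V t \<omega> / t = 0)"
    using subordinator_not_AE_zero[OF V mean_pos t] t by simp
qed

lemma mgf_levy_finite:
  fixes X :: "real \<Rightarrow> 'a \<Rightarrow> real"
  assumes X: "levy_process M X" and int: "integrable M (\<lambda>\<omega>. exp (\<eta> * X 1 \<omega>))" and t: "0 \<le> t"
  shows "(\<integral>\<^sup>+\<omega>. ennreal (exp (\<eta> * X t \<omega>)) \<partial>M) = ennreal (exp (t * ln (\<integral>\<omega>. exp (\<eta> * X 1 \<omega>) \<partial>M)))"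
proof -
  interpret prob_space M
    using X by (rule levy_process_prob_space)
  have "ennln (mgf M (X 1) \<eta>) = ereal (ln (expectation (\<lambda>\<omega>. exp (\<eta> * X 1 \<omega>))))"
    unfolding mgf_def using int by (simp add: ennln_nn_integral_exp)
  then show ?thesis
    using mgf_levy[OF X t, of \<eta>] by (simp add: mgf_def)
qed

lemma tendsto_nn_integral_exp_levy_rescaled:
  fixes X :: "real \<Rightarrow> 'a \<Rightarrow> real"
  assumes X: "levy_process M X" and \<epsilon>: "0 < \<epsilon>"
    and integrable: "\<And>\<eta>. \<bar>\<eta>\<bar> < \<epsilon> \<Longrightarrow> integrable M (\<lambda>\<omega>. exp (\<eta> * X 1 \<omega>))"
  shows "((\<lambda>t. \<integral>\<^sup>+\<omega>. ennreal (exp (c / t * X t \<omega>)) \<partial>M) \<longlongrightarrow> ennreal (exp (c * (\<integral>\<omega>. X 1 \<omega> \<partial>M)))) at_top"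
proof -
  interpret prob_space M
    using X by (rule levy_process_prob_space)
  define K where "K \<eta> = ln (expectation (\<lambda>\<omega>. exp (\<eta> * X 1 \<omega>)))" for \<eta>
  have K': "(K has_field_derivative (\<integral>\<omega>. X 1 \<omega> \<partial>M)) (at 0)"
    unfolding K_def using \<epsilon> integrable levy_process_measurable[OF X, of 1]
    by (intro has_field_derivative_ln_expectation_exp) auto
  have "eventually (\<lambda>t. ennreal (exp (t * K (c / t))) = (\<integral>\<^sup>+\<omega>. ennreal (exp (c / t * X t \<omega>)) \<partial>M)) at_top"
    using eventually_gt_at_top[of "max 0 (\<bar>c\<bar> / \<epsilon>)"]
  proof eventually_elim
    case (elim t)
    then have t: "0 < t"
      by simp
    have "\<bar>c\<bar> < t * \<epsilon>"
      using elim \<epsilon> by (simp add: pos_divide_less_eq)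
    then have "\<bar>c / t\<bar> < \<epsilon>"
      using t by (simp add: pos_divide_less_eq mult.commute)
    then show ?case
      unfolding K_def using t by (intro mgf_levy_finite[OF X integrable, symmetric]) simp_all
  qed
  moreover have "((\<lambda>t. t * K (c / t)) \<longlongrightarrow> c * (\<integral>\<omega>. X 1 \<omega> \<partial>M)) at_top"
    by (rule tendsto_at_top_rescaled_of_deriv[OF K']) (simp add: K_def prob_space)
  then have "((\<lambda>t. ennreal (exp (t * K (c / t)))) \<longlongrightarrow> ennreal (exp (c * (\<integral>\<omega>. X 1 \<omega> \<partial>M)))) at_top"
    by (intro tendsto_ennrealI tendsto_exp)
  ultimately show ?thesis
    by (rule Lim_transform_eventually[rotated])
qed

lemma tendsto_nn_integral_ennexp_subordinator:
  assumes V: "subordinator M V" and \<epsilon>: "0 < \<epsilon>"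
    and V_mgf: "\<And>\<eta>. \<bar>\<eta>\<bar> < \<epsilon> \<Longrightarrow> (\<integral>\<^sup>+\<omega>. ennreal (exp (\<eta> * V 1 \<omega>)) \<partial>M) < \<infinity>"
    and mean_pos: "0 < (\<integral>\<omega>. V 1 \<omega> \<partial>M)" and x: "x \<noteq> -\<infinity>"
  shows "((\<lambda>t. \<integral>\<^sup>+\<omega>. ennexp (ereal (V t \<omega> / t) * x) \<partial>M) \<longlongrightarrow> ennexp (ereal (\<integral>\<omega>. V 1 \<omega> \<partial>M) * x)) at_top"
proof (cases x)
  case PInf
  have "eventually (\<lambda>t. (\<integral>\<^sup>+\<omega>. ennexp (ereal (V t \<omega> / t) * x) \<partial>M) = \<infinity>) at_top"
    using eventually_ge_at_top[of 1]
    by eventually_elim (unfold PInf, rule nn_integral_ennexp_subordinator_infinity[OF V mean_pos])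
  then show ?thesis
    using mean_pos PInf by (simp add: tendsto_eventually)
next
  case (real c)
  note V_levy = subordinator_levy_process[OF V]
  have "integrable M (\<lambda>\<omega>. exp (\<eta> * V 1 \<omega>))" if "\<bar>\<eta>\<bar> < \<epsilon>" for \<eta>
    using V_mgf[OF that] levy_process_measurable[OF V_levy, of 1] by (intro integrableI_bounded) auto
  from tendsto_nn_integral_exp_levy_rescaled[OF V_levy \<epsilon> this, of c]
  show ?thesis
    unfolding real by (simp add: mult.commute)
qed (use x in simp)

lemma mgf_levy_subordinated:
  assumes S: "levy_process M S" and V: "subordinator M V"
    and indep: "prob_space.indep_set M (process_sigma M S) (process_sigma M V)" and t: "0 < t"
  shows "mgf M (\<lambda>\<omega>. S (V t \<omega> / t) \<omega>) \<theta> = (\<integral>\<^sup>+\<omega>. ennexp (ereal (V t \<omega> / t) * ennln (mgf M (S 1) \<theta>)) \<partial>M)"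
proof (rule mgf_levy_at_independent_time[OF S _ _ _ indep])
  have [measurable]: "V t \<in> borel_measurable M"
    using t by (intro levy_process_measurable[OF subordinator_levy_process[OF V]]) simp
  show "(\<lambda>\<omega>. V t \<omega> / t) \<in> borel_measurable M"
    by measurable
  show "AE \<omega> in M. 0 \<le> V t \<omega> / t"
    using subordinator_AE_nonneg[OF V, of t] t by (auto elim!: eventually_mono)
  show "(\<lambda>\<omega>. V t \<omega> / t) -` A \<inter> space M \<in> process_sigma M V" if "A \<in> sets borel" for A
    using t that by (intro process_sigma_vimage) auto
qed

lemma tendsto_mgf_levy_subordinated:
  assumes S: "levy_process M S" and V: "subordinator M V"
    and indep: "prob_space.indep_set M (process_sigma M S) (process_sigma M V)"
    and \<epsilon>: "0 < \<epsilon>" and V_mgf: "\<And>\<eta>. \<bar>\<eta>\<bar> < \<epsilon> \<Longrightarrow> (\<integral>\<^sup>+\<omega>. ennreal (exp (\<eta> * V 1 \<omega>)) \<partial>M) < \<infinity>"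
    and mean_pos: "0 < (\<integral>\<omega>. V 1 \<omega> \<partial>M)"
  shows "((\<lambda>t. mgf M (\<lambda>\<omega>. S (V t \<omega> / t) \<omega>) \<theta>)
    \<longlongrightarrow> ennexp (ereal (\<integral>\<omega>. V 1 \<omega> \<partial>M) * ennln (mgf M (S 1) \<theta>))) at_top"
proof -
  interpret prob_space M
    using S by (rule levy_process_prob_space)
  have "ennln (mgf M (S 1) \<theta>) \<noteq> -\<infinity>"
    using mgf_nonzero[OF levy_process_measurable[OF S]] by (simp add: ennln_def)
  from tendsto_nn_integral_ennexp_subordinator[OF V \<epsilon> V_mgf mean_pos this]
  show ?thesis
  proof (rule Lim_transform_eventually)
    show "eventually (\<lambda>t. (\<integral>\<^sup>+\<omega>. ennexp (ereal (V t \<omega> / t) * ennln (mgf M (S 1) \<theta>)) \<partial>M)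
        = mgf M (\<lambda>\<omega>. S (V t \<omega> / t) \<omega>) \<theta>) at_top"
      using eventually_gt_at_top[of 0]
      by eventually_elim (rule mgf_levy_subordinated[OF S V indep, symmetric])
  qed
qed

theorem proposition4p2:
  fixes M :: "'a measure"
    and S :: "real \<Rightarrow> 'a \<Rightarrow> real ^ 'h"
    and V :: "real \<Rightarrow> 'a \<Rightarrow> real"
  assumes S_levy: "levy_process M S"
    and S_mgf: "\<exists>\<epsilon>>0. \<forall>\<theta>::real^'h. norm \<theta> < \<epsilon> \<longrightarrow>
                  (\<integral>\<^sup>+ \<omega>. ennreal (exp (\<theta> \<bullet> S 1 \<omega>)) \<partial>M) < \<infinity>"
    and V_sub: "subordinator M V"
    and indep: "prob_space.indep_set M (process_sigma M S) (process_sigma M V)"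
    and V_mgf: "\<exists>\<epsilon>>0. \<forall>\<eta>::real. \<bar>\<eta>\<bar> < \<epsilon> \<longrightarrow>
                  (\<integral>\<^sup>+ \<omega>. ennreal (exp (\<eta> * V 1 \<omega>)) \<partial>M) < \<infinity>"
    and V_drift: "deriv (\<lambda>\<eta>. ln (\<integral>\<omega>. exp (\<eta> * V 1 \<omega>) \<partial>M)) 0 > 0"
  shows "\<forall>\<theta>::real^'h.
     ((\<lambda>t. \<integral>\<^sup>+ \<omega>. ennreal (exp (\<theta> \<bullet> S (V t \<omega> / t) \<omega>)) \<partial>M) \<longlongrightarrow>
        (\<integral>\<^sup>+ \<omega>. ennreal (exp (\<theta> \<bullet> S (deriv (\<lambda>\<eta>. ln (\<integral>\<omega>. exp (\<eta> * V 1 \<omega>) \<partial>M)) 0) \<omega>)) \<partial>M)) at_top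
   \<and> (\<integral>\<^sup>+ \<omega>. ennreal (exp (\<theta> \<bullet> S (deriv (\<lambda>\<eta>. ln (\<integral>\<omega>. exp (\<eta> * V 1 \<omega>) \<partial>M)) 0) \<omega>)) \<partial>M)
       = ennexp (ereal (deriv (\<lambda>\<eta>. ln (\<integral>\<omega>. exp (\<eta> * V 1 \<omega>) \<partial>M)) 0)
                 * ennln (\<integral>\<^sup>+ \<omega>. ennreal (exp (\<theta> \<bullet> S 1 \<omega>)) \<partial>M))"
proof -
  interpret prob_space M
    using S_levy by (rule levy_process_prob_space)
  obtain \<epsilon> where \<epsilon>: "0 < \<epsilon>" and V_fin: "\<And>\<eta>. \<bar>\<eta>\<bar> < \<epsilon> \<Longrightarrow> (\<integral>\<^sup>+\<omega>. ennreal (exp (\<eta> * V 1 \<omega>)) \<partial>M) < \<infinity>"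
    using V_mgf by auto
  have "((\<lambda>\<eta>. ln (\<integral>\<omega>. exp (\<eta> * V 1 \<omega>) \<partial>M)) has_field_derivative (\<integral>\<omega>. V 1 \<omega> \<partial>M)) (at 0)"
    using \<epsilon> V_fin levy_process_measurable[OF subordinator_levy_process[OF V_sub], of 1]
    by (intro has_field_derivative_ln_expectation_exp integrableI_bounded) auto
  then have drift: "deriv (\<lambda>\<eta>. ln (\<integral>\<omega>. exp (\<eta> * V 1 \<omega>) \<partial>M)) 0 = (\<integral>\<omega>. V 1 \<omega> \<partial>M)"
    by (rule DERIV_imp_deriv)
  with V_drift have mean_pos: "0 < (\<integral>\<omega>. V 1 \<omega> \<partial>M)"
    by simp
  show ?thesis
    unfolding drift mgf_def[symmetric]
  proof (intro allI conjI)
    fix \<theta> :: "real ^ 'h"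
    show limit_eq: "mgf M (S (\<integral>\<omega>. V 1 \<omega> \<partial>M)) \<theta> = ennexp (ereal (\<integral>\<omega>. V 1 \<omega> \<partial>M) * ennln (mgf M (S 1) \<theta>))"
      using mean_pos by (intro mgf_levy[OF S_levy]) simp
    show "((\<lambda>t. mgf M (\<lambda>\<omega>. S (V t \<omega> / t) \<omega>) \<theta>) \<longlongrightarrow> mgf M (S (\<integral>\<omega>. V 1 \<omega> \<partial>M)) \<theta>) at_top"
      unfolding limit_eq by (rule tendsto_mgf_levy_subordinated[OF S_levy V_sub indep \<epsilon> V_fin mean_pos])
  qed
qed

end
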